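(* Let $\gamma\in(0,1)$ be a constant. Consider Algorithm MWHVC (described in the context) run in the CONGEST model on a hypergraph $G=(V,E)$ of rank $f$ and maximum degree $\Delta\ge 3$ with nonnegative vertex weights $w$, with parameters $\varepsilon\in(0,1]$, $\beta=\varepsilon/(f+\varepsilon)$ and multiplier $$\alpha=\begin{cases}\left(\frac{\log\Delta}{\log\log\Delta}\right)^{1-\gamma} & \text{if } \frac{f}{\beta}<\left(\frac{\log\Delta}{\log\log\Delta}\right)^{\gamma},\\ 2 & \text{otherwise.}\end{cases}$$ Then the round complexity of the algorithm is $$O\left(\frac{\log\Delta}{\log\log\Delta}+\left(\frac{f^2}{\varepsilon}\right)^{1/\gamma}\cdot\log\log\Delta\right).$$
   Context: Let $G=(V,E)$ be a hypergraph with $n=|V|$: each hyperedge is a nonempty subset of $V$ of size at most $f$ (rank $f$). Vertices have nonnegative weights $w(v)$; weights and degrees are assumed polynomial in $n$. For $v\in V$, $E(v)=\{e\in E: v\in e\}$; $\Delta=\max_v |E(v)|\ge 3$. A hyperedge $e$ is covered by $C\subseteq V$ if $e\cap C\neq\emptyset$. The computation is distributed in synchronous rounds (CONGEST: messages of $O(\log n)$ bits) on the bipartite network with node set $V\cup E$ and a link between $v$ and $e$ iff $v\in e$. Parameters: $\varepsilon\in(0,1]$, $\beta=\varepsilon/(f+\varepsilon)$, and a multiplier $\alpha>1$. Algorithm MWHVC: Initialize $C\gets\emptyset$ and $E'(v)\gets E(v)$ for every $v$. Iteration $0$: every hyperedge $e$ sets $\mathrm{deal}_0(e)=\beta\cdot\min_{v\in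 e} w(v)/|E(v)|$ and $\delta_0(e)=\mathrm{deal}_0(e)$. For $i=1,2,\dots$: (a) every vertex $v\notin C$ (not terminated) checks whether $\sum_{e\in E(v)}\delta_{i-1}(e)\ge(1-\beta)w(v)$; if so, $v$ joins $C$, tells every $e\in E'(v)$ that $e$ is covered, and terminates. (b) Every uncovered hyperedge that receives such a message becomes covered, informs all its vertices, and terminates. (c) Every vertex $v\notin C$ that is told $e$ is covered sets $E'(v)\gets E'(v)\setminus\{e\}$; if $E'(v)=\emptyset$, $v$ terminates without joining $C$. (d) Every vertex $v\notin C$ sends "raise" to all $e\in E'(v)$ if $\sum_{e\in E'(v)}\mathrm{deal}_{i-1}(e)\le(\beta/\alpha)w(v)$, and otherwise sends "stuck" to all $e\in E'(v)$. (e) Every uncovered hyperedge $e$ sets $\mathrm{deal}_i(e)=\mathrm{deal}_{i-1}(e)$ if it received some "stuck" message, and $\mathrm{deal}_i(e)=\alpha\cdot\mathrm{deal}_{i-1}(e)$ otherwise, and $\delta_i(e)=\delta_{i-1}(e)+\mathrm{deal}_i(e)$, sending the new deal to its vertices. A vertex terminates when it is in $C$ or all its hyperedges are covered; a hyperedge terminates when covered. *)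

theory Defs
  imports Complex_Main
begin

definition inc :: "'a set set \<Rightarrow> 'a \<Rightarrow> 'a set set" where
  "inc E v = {e \<in> E. v \<in> e}"

definition maxdeg :: "'a set \<Rightarrow> 'a set set \<Rightarrow> nat" where
  "maxdeg V E = Max ((\<lambda>v. card (inc E v)) ` V)"

text \<open>State of algorithm MWHVC after an iteration: the cover C, the set of covered
  hyperedges, the vertices that terminated without joining C, and the current
  deal and delta values of the hyperedges.\<close>
record 'a mwstate =
  inC :: "'a set"
  covd :: "'a set set"
  dead :: "'a set"
  deal :: "'a set \<Rightarrow> real"
  dlt :: "'a set \<Rightarrow> real"

definition mw_init :: "'a set set \<Rightarrow> ('a \<Rightarrow> real) \<Rightarrow> real \<Rightarrow> 'a mwstate" where
  "mw_init E w \<beta> =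
     (let d0 = (\<lambda>e. \<beta> * Min ((\<lambda>v. w v / real (card (inc E v))) ` e))
      in \<lparr>inC = {}, covd = {}, dead = {}, deal = d0, dlt = d0\<rparr>)"

text \<open>Iteration i >= 1, steps (a)--(e). The set E'(v) of a non-terminated vertex v is
  E(v) minus the hyperedges covered so far.\<close>
definition mw_step :: "'a set \<Rightarrow> 'a set set \<Rightarrow> ('a \<Rightarrow> real) \<Rightarrow> real \<Rightarrow> real
      \<Rightarrow> 'a mwstate \<Rightarrow> 'a mwstate" where
  "mw_step V E w \<beta> \<alpha> s =
     (let J = {v \<in> V. v \<notin> inC s \<and> v \<notin> dead s \<and>
                 (\<Sum>e\<in>inc E v. dlt s e) \<ge> (1 - \<beta>) * w v};
          C' = inC s \<union> J;
          cv' = covd s \<union> {e \<in> E. e \<inter> J \<noteq> {}};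
          dd' = dead s \<union> {v \<in> V. v \<notin> C' \<and> inc E v - cv' = {}};
          raise = (\<lambda>v. (\<Sum>e\<in>inc E v - cv'. deal s e) \<le> (\<beta> / \<alpha>) * w v);
          dl' = (\<lambda>e. if e \<in> E \<and> e \<notin> cv'
                      then (if (\<exists>v\<in>e. \<not> raise v) then deal s e else \<alpha> * deal s e)
                      else deal s e);
          dt' = (\<lambda>e. if e \<in> E \<and> e \<notin> cv' then dlt s e + dl' e else dlt s e)
      in \<lparr>inC = C', covd = cv', dead = dd', deal = dl', dlt = dt'\<rparr>)"

definition mw_state :: "'a set \<Rightarrow> 'a set set \<Rightarrow> ('a \<Rightarrow> real) \<Rightarrow> real \<Rightarrow> real
      \<Rightarrow> nat \<Rightarrow> 'a mwstate" where
  "mw_state V E w \<beta> \<alpha> i = (mw_step V E w \<beta> \<alpha> ^^ i) (mw_init E w \<beta>)"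

text \<open>All vertices have terminated (then all hyperedges are covered as well).\<close>
definition mw_terminated :: "'a set \<Rightarrow> 'a mwstate \<Rightarrow> bool" where
  "mw_terminated V s \<longleftrightarrow> V \<subseteq> inC s \<union> dead s"

definition mw_alpha :: "real \<Rightarrow> nat \<Rightarrow> real \<Rightarrow> nat \<Rightarrow> real" where
  "mw_alpha \<gamma> f \<beta> \<Delta> =
     (let L = log 2 \<Delta> / log 2 (log 2 \<Delta>)
      in if real f / \<beta> < L powr \<gamma> then L powr (1 - \<gamma>) else 2)"

definition hypergraph :: "'a set \<Rightarrow> 'a set set \<Rightarrow> nat \<Rightarrow> bool" where
  "hypergraph V E f \<longleftrightarrow> finite V \<and> (\<forall>e\<in>E. e \<noteq> {} \<and> e \<subseteq> V \<and> card e \<le> f)"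

end

theory Submission
  imports Defs "HOL-Analysis.Harmonic_Numbers"
begin

(* If a hyperedge e is still uncovered after an iteration, then in that iteration either all
   vertices of e raised, multiplying deal(e) by alpha, or some vertex of e was stuck.
   A raise needs deal(e) <= beta w(u) / alpha for the vertex u of e minimising w(u) / |E(u)|,
   while deal_0(e) = beta w(u) / |E(u)| with w(u) > 0 (vertices of weight 0 join the cover in
   the first iteration), so e is raised at most log_alpha Delta times.  A stuck iteration
   increases the delta-sum of v over E(v) by more than beta w(v) / alpha, and v joins the cover
   once this sum reaches (1 - beta) w(v), so v is stuck at most alpha / beta + 1 times.  Hence
   every hyperedge is covered within log_alpha Delta + f (alpha / beta + 1) iterations.

   Put L = log Delta / log log Delta.  If f / beta < L^gamma and alpha = L^(1 - gamma), then
   log log Delta <= 10 log L gives log_alpha Delta <= 10 L / (1 - gamma), and f alpha / beta <= L.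
   Otherwise alpha = 2 and L^gamma <= f / beta <= 2 f^2 / epsilon, so that both
   log_2 Delta = L log log Delta and f (2 / beta + 1) are
   O((f^2 / epsilon)^(1/gamma) log log Delta). *)

lemma obtain_last_index:
  fixes m :: nat
  assumes "{i. i < m \<and> P i} \<noteq> {}"
  obtains j where "j < m" "P j" "card {i. i < m \<and> P i} = Suc (card {i. i < j \<and> P i})"
proof -
  let ?A = "{i. i < m \<and> P i}"
  define j where "j = Max ?A"
  have j: "j < m" "P j"
    using Max_in[OF _ assms] by (auto simp: j_def)
  have "?A = insert j {i. i < j \<and> P i}"
    using j Max_ge[of ?A] by (auto simp: j_def order.order_iff_strict)
  then show thesis
    using that j by simp
qed

locale mwhvc_run =
  fixes V :: "'a set" and E :: "'a set set" and f :: nat and w :: "'a \<Rightarrow> real"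
    and \<beta> \<alpha> :: real
  assumes hypergraph: "hypergraph V E f"
    and weight_nonneg: "\<And>v. v \<in> V \<Longrightarrow> 0 \<le> w v"
    and beta_pos: "0 < \<beta>" and alpha_gt_1: "1 < \<alpha>"
begin

abbreviation state :: "nat \<Rightarrow> 'a mwstate" where
  "state i \<equiv> mw_state V E w \<beta> \<alpha> i"

text \<open>Index \<open>i\<close> refers to iteration \<open>i + 1\<close>, which turns \<open>state i\<close> into
  \<open>state (Suc i)\<close>.\<close>

definition joining :: "nat \<Rightarrow> 'a set" where
  "joining i = {v \<in> V. v \<notin> inC (state i) \<and> v \<notin> dead (state i) \<and>
                      (\<Sum>e\<in>inc E v. dlt (state i) e) \<ge> (1 - \<beta>) * w v}"

definition raises :: "nat \<Rightarrow> 'a \<Rightarrow> bool" where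
  "raises i v \<longleftrightarrow> (\<Sum>e\<in>inc E v - covd (state (Suc i)). deal (state i) e) \<le> \<beta> / \<alpha> * w v"

lemma state_Suc: "state (Suc i) = mw_step V E w \<beta> \<alpha> (state i)"
  by (simp add: mw_state_def)

lemma inC_state_Suc: "inC (state (Suc i)) = inC (state i) \<union> joining i"
  by (simp add: state_Suc mw_step_def Let_def joining_def)

lemma covd_state_Suc: "covd (state (Suc i)) = covd (state i) \<union> {e \<in> E. e \<inter> joining i \<noteq> {}}"
  by (simp add: state_Suc mw_step_def Let_def joining_def)

lemma dead_state_Suc:
  "dead (state (Suc i)) =
     dead (state i) \<union> {v \<in> V. v \<notin> inC (state (Suc i)) \<and> inc E v - covd (state (Suc i)) = {}}"
  by (simp add: state_Suc mw_step_def Let_def joining_def)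

lemma deal_state_Suc:
  "deal (state (Suc i)) e =
     (if e \<in> E \<and> e \<notin> covd (state (Suc i)) \<and> (\<forall>v\<in>e. raises i v)
      then \<alpha> * deal (state i) e else deal (state i) e)"
  unfolding raises_def covd_state_Suc by (simp add: state_Suc mw_step_def Let_def joining_def)

lemma dlt_state_Suc:
  "dlt (state (Suc i)) e =
     (if e \<in> E \<and> e \<notin> covd (state (Suc i)) then dlt (state i) e + deal (state (Suc i)) e
      else dlt (state i) e)"
  unfolding deal_state_Suc raises_def covd_state_Suc
  by (simp add: state_Suc mw_step_def Let_def joining_def)

lemma state_0:
  "inC (state 0) = {}" "covd (state 0) = {}" "dead (state 0) = {}"
  "deal (state 0) = (\<lambda>e. \<beta> * Min ((\<lambda>v. w v / real (card (inc E v))) ` e))"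
  "dlt (state 0) = (\<lambda>e. \<beta> * Min ((\<lambda>v. w v / real (card (inc E v))) ` e))"
  by (simp_all add: mw_state_def mw_init_def Let_def)

lemma finite_V: "finite V"
  using hypergraph by (simp add: hypergraph_def)

lemma hyperedge_props: "e \<in> E \<Longrightarrow> e \<noteq> {} \<and> e \<subseteq> V \<and> card e \<le> f"
  using hypergraph by (simp add: hypergraph_def)

lemma finite_edge: "e \<in> E \<Longrightarrow> finite e"
  using hyperedge_props finite_V finite_subset by metis

lemma finite_inc: "finite (inc E v)"
proof -
  have "E \<subseteq> Pow V"
    using hyperedge_props by blast
  then show ?thesis
    using finite_V by (simp add: inc_def finite_subset)
qed

lemma card_inc_pos: "e \<in> E \<Longrightarrow> v \<in> e \<Longrightarrow> 0 < card (inc E v)"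
  using finite_inc by (auto simp: inc_def card_gt_0_iff)

lemma card_inc_le_maxdeg: "v \<in> V \<Longrightarrow> card (inc E v) \<le> maxdeg V E"
  unfolding maxdeg_def using finite_V by (intro Max_ge) auto

lemma covd_mono: "i \<le> j \<Longrightarrow> covd (state i) \<subseteq> covd (state j)"
  by (rule lift_Suc_mono_le[where f = "\<lambda>i. covd (state i)"]) (auto simp: covd_state_Suc)

lemma terminated_covers: "v \<in> inC (state i) \<union> dead (state i) \<Longrightarrow> inc E v \<subseteq> covd (state i)"
proof (induction i)
  case 0
  then show ?case by (simp add: state_0)
next
  case (Suc i)
  then consider "v \<in> inC (state i) \<union> dead (state i)" | "v \<in> joining i"
    | "inc E v - covd (state (Suc i)) = {}"
    using inC_state_Suc[of i] dead_state_Suc[of i] by blast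
  then show ?case
  proof cases
    case 1
    then show ?thesis using Suc.IH covd_mono[of i "Suc i"] by auto
  qed (auto simp: covd_state_Suc inc_def)
qed

lemma deal_nonneg: "e \<in> E \<Longrightarrow> 0 \<le> deal (state i) e"
proof (induction i)
  case 0
  have "0 \<le> Min ((\<lambda>v. w v / real (card (inc E v))) ` e)"
    using hyperedge_props[OF 0] finite_edge[OF 0] weight_nonneg by (subst Min_ge_iff) auto
  then show ?case
    using beta_pos by (simp add: state_0)
qed (use alpha_gt_1 in \<open>simp add: deal_state_Suc\<close>)

lemma dlt_nonneg: "e \<in> E \<Longrightarrow> 0 \<le> dlt (state i) e"
proof (induction i)
  case 0
  then show ?case using deal_nonneg[of e 0] by (simp add: state_0)
qed (use deal_nonneg in \<open>simp add: dlt_state_Suc\<close>)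

lemma dlt_sum_nonneg: "0 \<le> (\<Sum>e\<in>inc E v. dlt (state i) e)"
  by (intro sum_nonneg) (simp add: dlt_nonneg inc_def)

lemma dlt_sum_mono: "(\<Sum>e\<in>inc E v. dlt (state i) e) \<le> (\<Sum>e\<in>inc E v. dlt (state (Suc i)) e)"
  using deal_nonneg by (intro sum_mono) (auto simp: dlt_state_Suc inc_def)

definition active :: "'a \<Rightarrow> nat \<Rightarrow> bool" where
  "active v i \<longleftrightarrow> v \<notin> inC (state i) \<and> v \<notin> dead (state i)"

definition stuck :: "'a \<Rightarrow> nat \<Rightarrow> bool" where
  "stuck v i \<longleftrightarrow> active v (Suc i) \<and> \<not> raises i v"

definition raised :: "'a set \<Rightarrow> nat \<Rightarrow> bool" where
  "raised e i \<longleftrightarrow> e \<notin> covd (state (Suc i)) \<and> (\<forall>v\<in>e. raises i v)"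

lemma dlt_sum_active:
  "v \<in> V \<Longrightarrow> active v (Suc i) \<Longrightarrow> (\<Sum>e\<in>inc E v. dlt (state i) e) < (1 - \<beta>) * w v"
  using inC_state_Suc[of i] dead_state_Suc[of i] finite_V
  unfolding active_def joining_def by auto

lemma dlt_sum_stuck:
  assumes "stuck v i"
  shows "(\<Sum>e\<in>inc E v. dlt (state i) e) + \<beta> / \<alpha> * w v < (\<Sum>e\<in>inc E v. dlt (state (Suc i)) e)"
proof -
  let ?U = "inc E v - covd (state (Suc i))"
  have "\<not> raises i v"
    using assms by (simp add: stuck_def)
  then have step: "dlt (state (Suc i)) e = dlt (state i) e + (if e \<in> ?U then deal (state i) e else 0)"
    if "e \<in> inc E v" for e
    using that by (auto simp: dlt_state_Suc deal_state_Suc inc_def)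
  have "(\<Sum>e\<in>inc E v. dlt (state (Suc i)) e) =
        (\<Sum>e\<in>inc E v. dlt (state i) e) + (\<Sum>e\<in>?U. deal (state i) e)"
    using finite_inc by (simp add: step sum.distrib sum.If_cases Diff_eq Compl_eq)
  moreover have "\<beta> / \<alpha> * w v < (\<Sum>e\<in>?U. deal (state i) e)"
    using \<open>\<not> raises i v\<close> by (simp add: raises_def)
  ultimately show ?thesis by linarith
qed

lemma dlt_sum_ge_card_stuck:
  "real (card {i. i < m \<and> stuck v i}) * (\<beta> / \<alpha> * w v) \<le> (\<Sum>e\<in>inc E v. dlt (state m) e)"
proof (induction m)
  case 0
  show ?case using dlt_sum_nonneg by simp
next
  case (Suc m)
  show ?case
  proof (cases "stuck v m")
    case True
    have "{i. i < Suc m \<and> stuck v i} = insert m {i. i < m \<and> stuck v i}"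
      using True by auto
    then show ?thesis
      using Suc.IH dlt_sum_stuck[OF True] by (simp add: algebra_simps)
  next
    case False
    have "{i. i < Suc m \<and> stuck v i} = {i. i < m \<and> stuck v i}"
      using False less_Suc_eq by auto
    then show ?thesis
      using Suc.IH dlt_sum_mono[of m v] by simp
  qed
qed

lemma card_stuck_le:
  assumes "v \<in> V"
  shows "real (card {i. i < m \<and> stuck v i}) \<le> \<alpha> / \<beta> + 1"
proof (cases "{i. i < m \<and> stuck v i} = {}")
  case True
  show ?thesis unfolding True using alpha_gt_1 beta_pos by simp
next
  case False
  then obtain j where j: "stuck v j"
    and card_eq: "card {i. i < m \<and> stuck v i} = Suc (card {i. i < j \<and> stuck v i})"
    by (rule obtain_last_index)
  let ?k = "real (card {i. i < j \<and> stuck v i})"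
  have "?k * (\<beta> / \<alpha> * w v) < (1 - \<beta>) * w v"
    using dlt_sum_ge_card_stuck[of j v] dlt_sum_active[OF assms] j by (force simp: stuck_def)
  also have "\<dots> \<le> 1 * w v"
    using beta_pos weight_nonneg[OF assms] by (intro mult_right_mono) auto
  finally have "?k * (\<beta> / \<alpha>) < 1"
    using weight_nonneg[OF assms] by (metis mult.assoc mult_less_cancel_right)
  then have "?k < \<alpha> / \<beta>"
    using alpha_gt_1 beta_pos by (simp add: field_simps)
  then show ?thesis
    using card_eq by simp
qed

lemma deal_eq_power:
  "e \<in> E \<Longrightarrow> deal (state m) e = \<alpha> ^ card {i. i < m \<and> raised e i} * deal (state 0) e"
proof (induction m)
  case (Suc m)
  show ?case
  proof (cases "raised e m")
    case True
    have "{i. i < Suc m \<and> raised e i} = insert m {i. i < m \<and> raised e i}"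
      using True by auto
    then show ?thesis
      using True Suc by (simp add: deal_state_Suc raised_def)
  next
    case False
    have "{i. i < Suc m \<and> raised e i} = {i. i < m \<and> raised e i}"
      using False less_Suc_eq by auto
    then show ?thesis
      using False Suc by (auto simp: deal_state_Suc raised_def)
  qed
qed simp

lemma weight_zero_covered:
  assumes "e \<in> E" "u \<in> e" "w u = 0"
  shows "e \<in> covd (state 1)"
proof -
  have "u \<in> joining 0"
    using assms hyperedge_props[OF assms(1)] dlt_sum_nonneg[of 0 u] by (auto simp: joining_def state_0)
  then show ?thesis
    using assms by (auto simp: covd_state_Suc)
qed

lemma raised_power_le_maxdeg:
  assumes "e \<in> E" "raised e j"
  shows "\<alpha> ^ Suc (card {i. i < j \<and> raised e i}) \<le> real (maxdeg V E)"
proof -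
  let ?share = "\<lambda>v. w v / real (card (inc E v))"
  have "Min (?share ` e) \<in> ?share ` e"
    using finite_edge[OF assms(1)] hyperedge_props[OF assms(1)] by (intro Min_in) auto
  then obtain u where u: "u \<in> e" and u_min: "Min (?share ` e) = ?share u"
    by auto
  have uV: "u \<in> V"
    using u hyperedge_props[OF assms(1)] by blast
  let ?c = "real (card (inc E u))"
  let ?k = "card {i. i < j \<and> raised e i}"
  have c_pos: "0 < ?c"
    using card_inc_pos[OF assms(1) u] by simp
  have uncovered: "e \<notin> covd (state (Suc j))"
    using assms(2) by (simp add: raised_def)
  have "w u \<noteq> 0"
    using weight_zero_covered[OF assms(1) u] covd_mono[of 1 "Suc j"] uncovered by auto
  then have w_pos: "0 < w u"
    using weight_nonneg[OF uV] by simp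
  have "deal (state j) e \<le> (\<Sum>e\<in>inc E u - covd (state (Suc j)). deal (state j) e)"
    using assms(1) u uncovered deal_nonneg finite_inc
    by (intro member_le_sum) (auto simp: inc_def)
  also have "\<dots> \<le> \<beta> / \<alpha> * w u"
    using assms(2) u by (simp add: raised_def raises_def)
  finally have "\<alpha> ^ ?k * (\<beta> * (w u / ?c)) \<le> \<beta> / \<alpha> * w u"
    using deal_eq_power[OF assms(1)] u_min by (simp add: state_0)
  then have "(\<alpha> ^ ?k * \<alpha>) * (\<beta> * w u) \<le> ?c * (\<beta> * w u)"
    using alpha_gt_1 c_pos by (simp add: field_simps)
  then have "\<alpha> ^ Suc ?k \<le> ?c"
    using beta_pos w_pos by (simp add: mult.commute)
  also have "\<dots> \<le> real (maxdeg V E)"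
    using card_inc_le_maxdeg[OF uV] by simp
  finally show ?thesis .
qed

lemma card_raised_le:
  assumes "e \<in> E"
  shows "real (card {i. i < m \<and> raised e i}) \<le> ln (real (maxdeg V E)) / ln \<alpha>"
proof (cases "{i. i < m \<and> raised e i} = {}")
  case True
  show ?thesis unfolding True using alpha_gt_1 by (cases "maxdeg V E = 0") auto
next
  case False
  then obtain j where "raised e j"
    and card_eq: "card {i. i < m \<and> raised e i} = Suc (card {i. i < j \<and> raised e i})"
    by (rule obtain_last_index)
  then have "\<alpha> ^ card {i. i < m \<and> raised e i} \<le> real (maxdeg V E)"
    using raised_power_le_maxdeg[OF assms] by simp
  moreover have "0 < \<alpha> ^ card {i. i < m \<and> raised e i}"
    using alpha_gt_1 by simp
  ultimately have "ln (\<alpha> ^ card {i. i < m \<and> raised e i}) \<le> ln (real (maxdeg V E))"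
    by (subst ln_le_cancel_iff) auto
  then show ?thesis
    using alpha_gt_1 by (simp add: ln_realpow pos_le_divide_eq)
qed

lemma uncovered_raised_or_stuck:
  assumes "e \<in> E" "e \<notin> covd (state (Suc i))"
  shows "raised e i \<or> (\<exists>v\<in>e. stuck v i)"
proof (cases "\<forall>v\<in>e. raises i v")
  case True
  then show ?thesis using assms(2) by (simp add: raised_def)
next
  case False
  then obtain v where v: "v \<in> e" "\<not> raises i v" by blast
  then have "active v (Suc i)"
    using assms terminated_covers[of v "Suc i"] by (auto simp: active_def inc_def)
  then show ?thesis using v by (auto simp: stuck_def)
qed

lemma uncovered_edge_lifetime:
  assumes "e \<in> E" "e \<notin> covd (state m)"
  shows "real m \<le> ln (real (maxdeg V E)) / ln \<alpha> + real f * (\<alpha> / \<beta> + 1)"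
proof -
  let ?R = "{i. i < m \<and> raised e i}"
  let ?S = "\<lambda>v. {i. i < m \<and> stuck v i}"
  have eV: "e \<subseteq> V" and card_e: "card e \<le> f" and fin_e: "finite e"
    using hyperedge_props[OF assms(1)] finite_edge[OF assms(1)] by auto
  have "raised e i \<or> (\<exists>v\<in>e. stuck v i)" if "i < m" for i
    using assms covd_mono[of "Suc i" m] that by (intro uncovered_raised_or_stuck) auto
  then have "{..<m} \<subseteq> ?R \<union> (\<Union>v\<in>e. ?S v)"
    by auto
  then have "card {..<m} \<le> card (?R \<union> (\<Union>v\<in>e. ?S v))"
    using fin_e by (intro card_mono) auto
  then have "m \<le> card (?R \<union> (\<Union>v\<in>e. ?S v))"
    by simp
  also have "\<dots> \<le> card ?R + (\<Sum>v\<in>e. card (?S v))"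
    using card_Un_le[of ?R "\<Union>v\<in>e. ?S v"] card_UN_le[OF fin_e, of ?S] by linarith
  finally have "real m \<le> real (card ?R) + (\<Sum>v\<in>e. real (card (?S v)))"
    by (simp flip: of_nat_sum of_nat_add)
  also have "(\<Sum>v\<in>e. real (card (?S v))) \<le> real (card e) * (\<alpha> / \<beta> + 1)"
    using sum_mono[of e "\<lambda>v. real (card (?S v))" "\<lambda>_. \<alpha> / \<beta> + 1"] card_stuck_le eV by auto
  also have "\<dots> \<le> real f * (\<alpha> / \<beta> + 1)"
    using card_e alpha_gt_1 beta_pos by (intro mult_right_mono) auto
  finally show ?thesis
    using card_raised_le[OF assms(1), of m] by linarith
qed

lemma terminated_after:
  assumes "ln (real (maxdeg V E)) / ln \<alpha> + real f * (\<alpha> / \<beta> + 1) < real (Suc m)"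
  shows "mw_terminated V (state (Suc m))"
  unfolding mw_terminated_def
proof
  fix v assume "v \<in> V"
  show "v \<in> inC (state (Suc m)) \<union> dead (state (Suc m))"
  proof (rule ccontr)
    assume "v \<notin> inC (state (Suc m)) \<union> dead (state (Suc m))"
    then obtain e where "e \<in> E" "e \<notin> covd (state (Suc m))"
      using dead_state_Suc[of m] \<open>v \<in> V\<close> by (auto simp: inc_def)
    then show False
      using uncovered_edge_lifetime assms by fastforce
  qed
qed

corollary terminated_within:
  "\<exists>T. mw_terminated V (state T) \<and>
        real T \<le> ln (real (maxdeg V E)) / ln \<alpha> + real f * (\<alpha> / \<beta> + 1) + 1"
proof -
  define B where "B = ln (real (maxdeg V E)) / ln \<alpha> + real f * (\<alpha> / \<beta> + 1)"
  have "0 \<le> ln (real (maxdeg V E))"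
    by (cases "maxdeg V E = 0") auto
  then have "0 \<le> B"
    using alpha_gt_1 beta_pos by (simp add: B_def)
  then have "real (nat \<lfloor>B\<rfloor>) = of_int \<lfloor>B\<rfloor>"
    by simp
  then have "B < real (Suc (nat \<lfloor>B\<rfloor>))" and "real (Suc (nat \<lfloor>B\<rfloor>)) \<le> B + 1"
    using real_of_int_floor_add_one_gt[of B] of_int_floor_le[of B] by linarith+
  then show ?thesis
    unfolding B_def by (blast intro: terminated_after)
qed

end

lemma log2_le_powr:
  fixes x :: real
  assumes "0 < x"
  shows "log 2 x \<le> x powr (9/10)"
proof -
  have "ln (x powr (9/10) / exp 1) \<le> x powr (9/10) / exp 1 - 1"
    using assms by (intro ln_le_minus_one) simp
  then have "9/10 * ln x \<le> x powr (9/10) / exp 1"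
    using assms by (simp add: ln_div)
  also have "\<dots> \<le> x powr (9/10) / 2"
    using exp_ge_add_one_self[of "1::real"] by (intro divide_left_mono) auto
  finally have "ln x \<le> 2/3 * x powr (9/10)"
    using powr_ge_zero[of x "9/10"] by linarith
  also have "\<dots> \<le> ln 2 * x powr (9/10)"
    using ln2_ge_two_thirds by (intro mult_right_mono) auto
  finally show ?thesis
    by (simp add: log_def field_simps)
qed

lemma log_log_bounds:
  fixes D :: real
  assumes "3 \<le> D"
  defines "x \<equiv> log 2 D" and "L \<equiv> log 2 D / log 2 (log 2 D)"
  shows "1/2 < log 2 x" and "1 < L" and "ln x \<le> 10 * ln L" and "ln D = L * ln x"
proof -
  have sqrt2: "sqrt 2 < (3/2::real)"
    by (rule real_less_lsqrt) (auto simp: power2_eq_square)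
  have "2 powr (3/2) = 2 * (sqrt 2::real)"
    using powr_add[of "2::real" 1 "1/2"] by (simp add: powr_half_sqrt)
  then have x_gt: "3/2 < x"
    unfolding x_def using assms sqrt2 by (subst less_log_iff) auto
  then show ll_gt: "1/2 < log 2 x"
    using sqrt2 by (subst less_log_iff) (auto simp: powr_half_sqrt)
  have "x powr (1/10) * log 2 x \<le> x powr (1/10) * x powr (9/10)"
    using x_gt by (intro mult_left_mono log2_le_powr) auto
  also have "\<dots> = x"
    using x_gt by (simp flip: powr_add)
  finally have "x powr (1/10) \<le> x / log 2 x"
    using ll_gt by (simp add: pos_le_divide_eq)
  then have L_ge: "x powr (1/10) \<le> L"
    by (simp add: L_def x_def)
  moreover have "1 < x powr (1/10)"
    using x_gt by simp
  ultimately show L_gt: "1 < L"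
    by linarith
  have "ln (x powr (1/10)) \<le> ln L"
    using L_ge L_gt x_gt by (subst ln_le_cancel_iff) auto
  then show "ln x \<le> 10 * ln L"
    using x_gt by simp
  show "ln D = L * ln x"
    using x_gt assms by (simp add: L_def x_def log_def)
qed

lemma rounds_bound_small_rank:
  fixes \<gamma> \<beta> L x D :: real and f :: nat
  assumes "0 < \<gamma>" "\<gamma> < 1" "1 < L" "ln x \<le> 10 * ln L" "ln D = L * ln x"
    and "0 < \<beta>" "\<beta> \<le> 1" "real f / \<beta> < L powr \<gamma>"
  shows "ln D / ln (L powr (1 - \<gamma>)) + real f * (L powr (1 - \<gamma>) / \<beta> + 1)
           \<le> (10 / (1 - \<gamma>) + 2) * L"
proof -
  have ln_alpha: "ln (L powr (1 - \<gamma>)) = (1 - \<gamma>) * ln L" and "0 < ln L"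
    using assms(3) by simp_all
  have "ln D \<le> 10 / (1 - \<gamma>) * L * ((1 - \<gamma>) * ln L)"
    using assms(2-5) by (simp add: mult_left_mono)
  then have log_term: "ln D / ln (L powr (1 - \<gamma>)) \<le> 10 / (1 - \<gamma>) * L"
    using assms(2) \<open>0 < ln L\<close> by (simp add: ln_alpha pos_divide_le_eq)
  have "real f / \<beta> * L powr (1 - \<gamma>) \<le> L powr \<gamma> * L powr (1 - \<gamma>)"
    using assms(8) by (intro mult_right_mono) auto
  also have "\<dots> = L"
    using assms(3) by (simp flip: powr_add)
  finally have "real f / \<beta> * L powr (1 - \<gamma>) \<le> L" .
  moreover have "real f \<le> real f / \<beta>"
    using assms(6,7) by (simp add: le_divide_eq mult_left_le)
  moreover have "L powr \<gamma> \<le> L"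
    using assms(1-3) powr_mono[of \<gamma> 1 L] by simp
  ultimately have "real f * (L powr (1 - \<gamma>) / \<beta> + 1) \<le> 2 * L"
    using assms(8) by (simp add: algebra_simps)
  with log_term show ?thesis
    by (simp add: algebra_simps)
qed

lemma rounds_bound_large_rank:
  fixes \<gamma> \<epsilon> \<beta> L ll :: real and f :: nat
  assumes "0 < \<gamma>" "\<gamma> \<le> 1" "1 < L" "1/2 < ll" "0 < \<epsilon>" "\<epsilon> \<le> 1"
    and "\<beta> = \<epsilon> / (real f + \<epsilon>)" "L powr \<gamma> \<le> real f / \<beta>"
  shows "L * ll + real f * (2 / \<beta> + 1) \<le> (2 powr (1/\<gamma>) + 12) * ((real f ^ 2 / \<epsilon>) powr (1/\<gamma>) * ll)"
proof -
  define Q where "Q = real f ^ 2 / \<epsilon>"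
  define P where "P = Q powr (1/\<gamma>)"
  have "0 < L powr \<gamma>"
    using assms(3) by simp
  then have f_ge: "1 \<le> real f"
    using assms(8) by (cases "f = 0") auto
  then have "\<epsilon> \<le> real f ^ 2"
    using assms(6) one_le_power[of "real f" 2] by linarith
  then have Q_ge: "1 \<le> Q"
    using assms(5) by (simp add: Q_def le_divide_eq)
  have "real f / \<beta> = real f * (real f + \<epsilon>) / \<epsilon>"
    unfolding assms(7) by simp
  also have "\<dots> \<le> real f * (2 * real f) / \<epsilon>"
    using assms(5,6) f_ge by (intro divide_right_mono mult_left_mono) auto
  finally have f_beta: "real f / \<beta> \<le> 2 * Q"
    by (simp add: Q_def power2_eq_square mult.left_commute)
  have "L = (L powr \<gamma>) powr (1/\<gamma>)"
    using assms(1,3) by (simp add: powr_powr)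
  also have "\<dots> \<le> (2 * Q) powr (1/\<gamma>)"
    using assms(1,8) f_beta \<open>0 < L powr \<gamma>\<close> by (intro powr_mono2) auto
  finally have L_le: "L \<le> 2 powr (1/\<gamma>) * P"
    using Q_ge by (simp add: P_def powr_mult)
  have "Q \<le> P"
    using Q_ge assms(1,2) powr_mono[of 1 "1/\<gamma>" Q] by (simp add: P_def field_simps)
  have "0 < \<beta>" "\<beta> \<le> 1"
    using assms(5,7) by auto
  then have "real f \<le> real f / \<beta>"
    by (simp add: le_divide_eq mult_left_le)
  then have "real f * (2 / \<beta> + 1) \<le> 6 * P"
    using f_beta \<open>Q \<le> P\<close> by (simp add: algebra_simps)
  also have "\<dots> \<le> 12 * (P * ll)"
    using assms(4) Q_ge \<open>Q \<le> P\<close> by simp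
  finally have "real f * (2 / \<beta> + 1) \<le> 12 * (P * ll)" .
  moreover have "L * ll \<le> 2 powr (1/\<gamma>) * (P * ll)"
    using L_le assms(4) by (simp add: mult_right_mono)
  ultimately show ?thesis
    by (simp add: P_def Q_def algebra_simps)
qed

lemma mw_alpha_rounds_bound:
  fixes \<gamma> \<epsilon> :: real and f \<Delta> :: nat
  assumes "0 < \<gamma>" "\<gamma> < 1" "3 \<le> \<Delta>" "0 < \<epsilon>" "\<epsilon> \<le> 1"
  defines "\<beta> \<equiv> \<epsilon> / (real f + \<epsilon>)"
  defines "\<alpha> \<equiv> mw_alpha \<gamma> f \<beta> \<Delta>"
  shows "1 < \<alpha>"
    and "ln \<Delta> / ln \<alpha> + real f * (\<alpha> / \<beta> + 1) + 1
           \<le> (10 / (1 - \<gamma>) + 2 powr (1 / \<gamma>) + 15)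
              * (log 2 \<Delta> / log 2 (log 2 \<Delta>) + (real f ^ 2 / \<epsilon>) powr (1 / \<gamma>) * log 2 (log 2 \<Delta>))"
proof -
  define L where "L = log 2 \<Delta> / log 2 (log 2 \<Delta>)"
  define ll where "ll = log 2 (log 2 \<Delta>)"
  define P where "P = (real f ^ 2 / \<epsilon>) powr (1 / \<gamma>)"
  define K where "K = 10 / (1 - \<gamma>) + 2 powr (1 / \<gamma>) + 15"
  have "3 \<le> real \<Delta>"
    using assms(3) by simp
  note log_log = log_log_bounds[OF this, folded L_def ll_def]
  have "0 < \<beta>" "\<beta> \<le> 1"
    using assms(4) by (auto simp: \<beta>_def)
  have "0 \<le> P * ll"
    using log_log(1) by (simp add: P_def)
  have K_ge: "10 / (1 - \<gamma>) + 3 \<le> K" "2 powr (1 / \<gamma>) + 12 \<le> K" "1 \<le> K"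
    using assms(2) by (auto simp: K_def)
  show "1 < \<alpha>"
    using log_log(2) assms(1,2) by (simp add: \<alpha>_def mw_alpha_def Let_def L_def[symmetric])
  show "ln \<Delta> / ln \<alpha> + real f * (\<alpha> / \<beta> + 1) + 1 \<le> K * (L + P * ll)"
  proof (cases "real f / \<beta> < L powr \<gamma>")
    case True
    then have "\<alpha> = L powr (1 - \<gamma>)"
      by (simp add: \<alpha>_def mw_alpha_def Let_def L_def[symmetric])
    then have "ln \<Delta> / ln \<alpha> + real f * (\<alpha> / \<beta> + 1) + 1 \<le> (10 / (1 - \<gamma>) + 3) * L"
      using rounds_bound_small_rank[OF assms(1,2) log_log(2-4) \<open>0 < \<beta>\<close> \<open>\<beta> \<le> 1\<close> True]
        log_log(2) by (simp add: algebra_simps)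
    also have "\<dots> \<le> K * (L + P * ll)"
      using K_ge log_log(2) \<open>0 \<le> P * ll\<close>
      by (intro mult_mono) auto
    finally show ?thesis .
  next
    case False
    then have "\<alpha> = 2"
      by (simp add: \<alpha>_def mw_alpha_def Let_def L_def[symmetric])
    moreover have "L * ll = ln \<Delta> / ln 2"
      using log_log(1) by (simp add: L_def ll_def log_def[of 2 "real \<Delta>"])
    ultimately have "ln \<Delta> / ln \<alpha> + real f * (\<alpha> / \<beta> + 1) + 1
                       \<le> (2 powr (1 / \<gamma>) + 12) * (P * ll) + L"
      using rounds_bound_large_rank[OF assms(1) _ log_log(2,1) assms(4,5)
          meta_eq_to_obj_eq[OF \<beta>_def]] False log_log(2) assms(2)
      by (simp add: P_def)
    also have "\<dots> \<le> K * (P * ll) + K * L"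
      using K_ge log_log(2) \<open>0 \<le> P * ll\<close> by (intro add_mono mult_right_mono) auto
    finally show ?thesis
      by (simp add: algebra_simps)
  qed
qed

theorem mainTheorem9:
  fixes \<gamma> :: real
  assumes "0 < \<gamma>" "\<gamma> < 1"
  shows "\<exists>K>0. \<forall>(V::'a set) E f (w::'a \<Rightarrow> real) \<epsilon>.
     hypergraph V E f \<longrightarrow> maxdeg V E \<ge> 3 \<longrightarrow> (\<forall>v\<in>V. w v \<ge> 0) \<longrightarrow>
     0 < \<epsilon> \<longrightarrow> \<epsilon> \<le> 1 \<longrightarrow>
     (let \<Delta> = maxdeg V E; \<beta> = \<epsilon> / (real f + \<epsilon>); \<alpha> = mw_alpha \<gamma> f \<beta> \<Delta>
      in \<exists>T. mw_terminated V (mw_state V E w \<beta> \<alpha> T) \<and>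
             real T \<le> K * (log 2 \<Delta> / log 2 (log 2 \<Delta>)
                           + (real f ^ 2 / \<epsilon>) powr (1 / \<gamma>) * log 2 (log 2 \<Delta>)))"
proof (intro exI[of _ "10 / (1 - \<gamma>) + 2 powr (1 / \<gamma>) + 15"] conjI allI impI)
  show "0 < 10 / (1 - \<gamma>) + 2 powr (1 / \<gamma>) + 15"
    using assms by (simp add: add_pos_nonneg)
next
  fix V :: "'a set" and E f and w :: "'a \<Rightarrow> real" and \<epsilon> :: real
  assume "hypergraph V E f" "3 \<le> maxdeg V E" "\<forall>v\<in>V. 0 \<le> w v" "0 < \<epsilon>" "\<epsilon> \<le> 1"
  define \<beta> where "\<beta> = \<epsilon> / (real f + \<epsilon>)"
  define \<alpha> where "\<alpha> = mw_alpha \<gamma> f \<beta> (maxdeg V E)"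
  note bound = mw_alpha_rounds_bound[where f = f, OF assms \<open>3 \<le> maxdeg V E\<close> \<open>0 < \<epsilon>\<close>
      \<open>\<epsilon> \<le> 1\<close>, folded \<beta>_def, folded \<alpha>_def]
  interpret mwhvc_run V E f w \<beta> \<alpha>
    using \<open>hypergraph V E f\<close> \<open>\<forall>v\<in>V. 0 \<le> w v\<close> \<open>0 < \<epsilon>\<close> bound(1)
    by unfold_locales (auto simp: \<beta>_def)
  show "let \<Delta> = maxdeg V E; \<beta> = \<epsilon> / (real f + \<epsilon>); \<alpha> = mw_alpha \<gamma> f \<beta> \<Delta>
      in \<exists>T. mw_terminated V (mw_state V E w \<beta> \<alpha> T) \<and>
             real T \<le> (10 / (1 - \<gamma>) + 2 powr (1 / \<gamma>) + 15) * (log 2 \<Delta> / log 2 (log 2 \<Delta>)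
                           + (real f ^ 2 / \<epsilon>) powr (1 / \<gamma>) * log 2 (log 2 \<Delta>))"
    using terminated_within bound(2) unfolding Let_def \<beta>_def[symmetric] \<alpha>_def[symmetric]
    by (meson order_trans)
qed

end
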